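(* Let $(X,m)$ be a central configuration of $n$ particles $X=\{x_1,\ldots,x_n\}\subset\mathbb{R}^N$ with nonzero masses $m_i$, exponent $a\neq0$, total mass $\mu_0=\sum_im_i=0$ and constant $\lambda\neq0$. Let $d$ be the dimension and $c=(n-1)-d$ the codimension of $X$, and $X_j=X\setminus\{x_j\}$. Then: (1) $m=(m_1,\ldots,m_n)\in\mathbb{W}_0(X)$. (2) For every $j$, $x_j$ is the barycenter of $(X_j,m|_{X_j})$. (3) $c\ge1$ and the second moment $\mu_2(p)=\sum_im_i\overrightarrow{px_i}^2$ is constant; in particular $\sum_{i<j}m_im_js_{ij}=0$ and $\sum_{k=1}^nm_k(s_{ij}-s_{jk}+s_{ik})=0$ for all $i,j$. If $c=1$ then, for every $j$, $X_j$ is a $d$-dimensional simplex and $x_j$ is not on the boundary of the convex hull of $X_j$. (4) $d\le n-2$, and if $\Delta_{d+2\,\ldots\,n}\neq0$ then $(-1)^{i-d}m_i\Delta_{d+2\,\ldots\,n}=\sum_{l=d+2}^nm_l\Delta_{i\,d+2\,\ldots\,\widehat{l}\,\ldots\,n}$ for $i=1,\ldots,d+1$.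
   Context: $s_{ij}=\overrightarrow{x_ix_j}^2$; accelerations $\overrightarrow{\gamma}_j=-\sum_{i\neq j}m_is_{ij}^a\overrightarrow{x_ix_j}$. $(X,m)$ is central if there are a vector $\overrightarrow{\gamma}_O$, a point $x_O$ and $\lambda\in\mathbb{R}$ with $\overrightarrow{\gamma}_j-\overrightarrow{\gamma}_O=\lambda\overrightarrow{x_Ox_j}$ for all $j$. $\mathbb{W}_0(X)$ is the set of weight vectors $(w_i)$ with $\sum_iw_i\overrightarrow{px_i}=\overrightarrow{O}$ for all $p$. The barycenter of a weighted system $(Y,w)$ with nonzero total weight is the unique point $G$ with $\sum_{y}w(y)\overrightarrow{Gy}=\overrightarrow{O}$. In (4), $X$ is regarded as lying in $\mathbb{R}^d$ (its affine hull) and $\Delta_{j_1\ldots j_\beta}$ is the determinant of the augmented configuration matrix (columns $\binom{1}{x_j}$, increasing index) of the $(d+1)$-point subconfiguration $X\setminus\{x_{j_1},\ldots,x_{j_\beta}\}$; $\widehat{l}$ means the index $l$ is omitted. *)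

theory Defs
  imports "HOL-Analysis.Analysis"
begin

text \<open>Particles are indexed by a finite index set I (in the statement I = {1..n});
  positions x :: nat \<Rightarrow> 'a (the ambient space R^N), masses m :: nat \<Rightarrow> real.\<close>

definition sdist :: "(nat \<Rightarrow> 'a::euclidean_space) \<Rightarrow> nat \<Rightarrow> nat \<Rightarrow> real" where
  "sdist x i j = (norm (x j - x i))\<^sup>2"

definition accel :: "(nat \<Rightarrow> real) \<Rightarrow> real \<Rightarrow> (nat \<Rightarrow> 'a::euclidean_space) \<Rightarrow> nat set \<Rightarrow> nat \<Rightarrow> 'a" where
  "accel m a x I j = - (\<Sum>i\<in>I - {j}. (m i * sdist x i j powr a) *\<^sub>R (x j - x i))"

definition central :: "(nat \<Rightarrow> real) \<Rightarrow> real \<Rightarrow> (nat \<Rightarrow> 'a::euclidean_space) \<Rightarrow> nat set \<Rightarrow> real \<Rightarrow> bool" where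
  "central m a x I lam = (\<exists>gO xO. \<forall>j\<in>I. accel m a x I j - gO = lam *\<^sub>R (x j - xO))"

definition W0 :: "(nat \<Rightarrow> 'a::euclidean_space) \<Rightarrow> nat set \<Rightarrow> (nat \<Rightarrow> real) set" where
  "W0 x I = {w. \<forall>p. (\<Sum>i\<in>I. w i *\<^sub>R (x i - p)) = 0}"

text \<open>Barycenter of the weighted system (x restricted to J, w): the unique G with
  sum_{i in J} w_i (x_i - G) = 0 (meaningful when the total weight is nonzero).\<close>
definition barycenter :: "(nat \<Rightarrow> real) \<Rightarrow> (nat \<Rightarrow> 'a::euclidean_space) \<Rightarrow> nat set \<Rightarrow> 'a" where
  "barycenter w x J = (THE G. (\<Sum>i\<in>J. w i *\<^sub>R (x i - G)) = 0)"

definition moment2 :: "(nat \<Rightarrow> real) \<Rightarrow> (nat \<Rightarrow> 'a::euclidean_space) \<Rightarrow> nat set \<Rightarrow> 'a \<Rightarrow> real" where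
  "moment2 m x I p = (\<Sum>i\<in>I. m i * (norm (x i - p))\<^sup>2)"

definition ldet :: "nat \<Rightarrow> (nat \<Rightarrow> nat \<Rightarrow> real) \<Rightarrow> real" where
  "ldet k A = (\<Sum>p\<in>{p. p permutes {..<k}}. of_int (sign p) * (\<Prod>r<k. A r (p r)))"

definition affine_coords :: "(nat \<Rightarrow> 'a::euclidean_space) \<Rightarrow> nat set \<Rightarrow> nat \<Rightarrow> (nat \<Rightarrow> nat \<Rightarrow> real) \<Rightarrow> bool" where
  "affine_coords x I d y = (\<exists>orig b. inj_on b {..<d} \<and> independent (b ` {..<d}) \<and>
      (\<forall>i\<in>I. x i = orig + (\<Sum>k<d. y i k *\<^sub>R b k)))"

text \<open>Determinant of the augmented configuration matrix of the (d+1)-point subconfiguration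
  with index set S: column c is (1, y_{s_c}) where s_0 < s_1 < ... are the elements of S.\<close>
definition aug_det :: "nat \<Rightarrow> (nat \<Rightarrow> nat \<Rightarrow> real) \<Rightarrow> nat set \<Rightarrow> real" where
  "aug_det d y S = ldet (d + 1)
     (\<lambda>r c. if r = 0 then 1 else y (sorted_list_of_set S ! c) (r - 1))"

definition Delta :: "nat \<Rightarrow> nat \<Rightarrow> (nat \<Rightarrow> nat \<Rightarrow> real) \<Rightarrow> nat set \<Rightarrow> real" where
  "Delta n d y J = aug_det d y ({1..n} - J)"

end

theory Submission
  imports Defs "Jordan_Normal_Form.Determinant"
begin

text \<open>
  Weighted by the masses, the mutual attractions cancel in pairs, so the centrality relation
  with \<open>lam \<noteq> 0\<close> and total mass zero forces \<open>\<Sum> m\<^sub>i x\<^sub>i = 0\<close>: the mass vector is an affine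
  dependence of the configuration, i.e. it lies in \<open>W\<^sub>0(X)\<close>.
  Deleting \<open>x\<^sub>j\<close> exhibits it as the affine combination of the other points with the nonzero
  coefficients \<open>-m\<^sub>i/m\<^sub>j\<close>; this gives the barycenter property, the codimension bound and, in
  codimension one, a simplex whose relative interior contains \<open>x\<^sub>j\<close>. The second moment is
  constant by the parallel-axis expansion. In affine coordinates the dependence reads
  \<open>\<Sum> m\<^sub>j (1, y\<^sub>j) = 0\<close>, and the determinant identity is Cramer's rule for this linear relation
  among the augmented columns.
\<close>

lemma sum_sum_antisym_eq_0:
  fixes F :: "'a \<Rightarrow> 'a \<Rightarrow> 'b::real_vector"
  assumes antisym: "\<And>i j. F j i = - F i j"
  shows "(\<Sum>i\<in>I. \<Sum>j\<in>I. F i j) = 0"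
proof -
  define T where "T = (\<Sum>i\<in>I. \<Sum>j\<in>I. F i j)"
  have "T = (\<Sum>j\<in>I. \<Sum>i\<in>I. F i j)"
    unfolding T_def by (rule sum.swap)
  also have "\<dots> = (\<Sum>j\<in>I. \<Sum>i\<in>I. - F j i)"
    by (intro sum.cong refl) (rule antisym)
  also have "\<dots> = - T"
    unfolding T_def by (simp only: sum_negf)
  finally have "2 *\<^sub>R T = 0"
    by (simp add: scaleR_2 eq_neg_iff_add_eq_0)
  then show ?thesis
    unfolding T_def by simp
qed

lemma sum_sum_less_symmetric:
  fixes g :: "'a::linorder \<Rightarrow> 'a \<Rightarrow> 'b::comm_ring_1"
  assumes symmetric: "\<And>i j. g i j = g j i" and diag: "\<And>i. g i i = 0"
  shows "2 * (\<Sum>i\<in>I. \<Sum>j\<in>I. if i < j then g i j else 0) = (\<Sum>i\<in>I. \<Sum>j\<in>I. g i j)"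
proof -
  let ?U = "\<Sum>i\<in>I. \<Sum>j\<in>I. if i < j then g i j else 0"
  have split: "g i j = (if i < j then g i j else 0) + (if j < i then g j i else 0)" for i j
    using diag[of i] symmetric[of i j] by (cases i j rule: linorder_cases) auto
  have "(\<Sum>i\<in>I. \<Sum>j\<in>I. g i j)
      = (\<Sum>i\<in>I. \<Sum>j\<in>I. (if i < j then g i j else 0) + (if j < i then g j i else 0))"
    by (intro sum.cong refl) (rule split)
  also have "\<dots> = ?U + (\<Sum>i\<in>I. \<Sum>j\<in>I. if j < i then g j i else 0)"
    by (simp only: sum.distrib)
  also have "(\<Sum>i\<in>I. \<Sum>j\<in>I. if j < i then g j i else 0) = ?U"
    by (rule sum.swap)
  finally show ?thesis
    unfolding mult_2 by (rule sym)
qed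

lemma sdist_commute: "sdist x i j = sdist x j i"
  unfolding sdist_def by (simp add: norm_minus_commute)

lemma sum_scaleR_diff_eq:
  fixes x :: "'b \<Rightarrow> 'a::real_vector"
  shows "(\<Sum>i\<in>I. w i *\<^sub>R (x i - p)) = (\<Sum>i\<in>I. w i *\<^sub>R x i) - sum w I *\<^sub>R p"
  by (simp add: scaleR_right_diff_distrib sum_subtractf scaleR_sum_left)

lemma W0_iff: "w \<in> W0 x I \<longleftrightarrow> sum w I = 0 \<and> (\<Sum>i\<in>I. w i *\<^sub>R x i) = 0"
proof
  assume W: "w \<in> W0 x I"
  then have "(\<Sum>i\<in>I. w i *\<^sub>R (x i - 0)) = 0"
    unfolding W0_def by blast
  then have moment: "(\<Sum>i\<in>I. w i *\<^sub>R x i) = 0"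
    by simp
  obtain b :: 'a where "b \<in> Basis"
    using nonempty_Basis by blast
  moreover have "sum w I *\<^sub>R b = 0"
    using W moment unfolding W0_def sum_scaleR_diff_eq by auto
  ultimately show "sum w I = 0 \<and> (\<Sum>i\<in>I. w i *\<^sub>R x i) = 0"
    using moment by auto
qed (simp add: W0_def sum_scaleR_diff_eq)

lemma barycenter_eqI:
  assumes weight: "sum w J \<noteq> 0" and G: "(\<Sum>i\<in>J. w i *\<^sub>R (x i - G)) = 0"
  shows "barycenter w x J = G"
  unfolding barycenter_def
proof (rule the_equality)
  fix G' assume G': "(\<Sum>i\<in>J. w i *\<^sub>R (x i - G')) = 0"
  have "(\<Sum>i\<in>J. w i *\<^sub>R (x i - G')) = (\<Sum>i\<in>J. w i *\<^sub>R (x i - G)) + sum w J *\<^sub>R (G - G')"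
    unfolding sum_scaleR_diff_eq by (simp add: algebra_simps)
  then show "G' = G"
    using G G' weight by simp
qed (fact G)

lemma sum_mass_accel_eq_0:
  assumes "finite I"
  shows "(\<Sum>j\<in>I. m j *\<^sub>R accel m a x I j) = 0"
proof -
  define F where "F i j = (m i * m j * sdist x i j powr a) *\<^sub>R (x j - x i)" for i j
  have "m j *\<^sub>R accel m a x I j = - (\<Sum>i\<in>I. F i j)" if "j \<in> I" for j
  proof -
    have "m j *\<^sub>R accel m a x I j = - (\<Sum>i\<in>I - {j}. F i j)"
      unfolding accel_def F_def by (simp add: scaleR_sum_right mult_ac)
    also have "(\<Sum>i\<in>I - {j}. F i j) = (\<Sum>i\<in>I. F i j)"
      using that assms by (simp add: sum_diff1 F_def)
    finally show ?thesis .
  qed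
  moreover have "(\<Sum>j\<in>I. \<Sum>i\<in>I. F i j) = 0"
    by (rule sum_sum_antisym_eq_0) (simp add: F_def sdist_commute algebra_simps)
  ultimately show ?thesis
    by (simp add: sum_negf)
qed

lemma central_imp_W0:
  assumes fin: "finite I" and total: "sum m I = 0" and "lam \<noteq> 0"
    and "central m a x I lam"
  shows "m \<in> W0 x I"
proof -
  obtain gO xO where central: "\<forall>j\<in>I. accel m a x I j - gO = lam *\<^sub>R (x j - xO)"
    using \<open>central m a x I lam\<close> unfolding central_def by blast
  have "lam *\<^sub>R (\<Sum>j\<in>I. m j *\<^sub>R (x j - xO)) = (\<Sum>j\<in>I. m j *\<^sub>R (accel m a x I j - gO))"
    using central by (simp add: scaleR_sum_right mult.commute)
  also have "\<dots> = 0"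
    using sum_mass_accel_eq_0[OF fin] total by (simp add: sum_scaleR_diff_eq)
  finally have "(\<Sum>j\<in>I. m j *\<^sub>R x j) = 0"
    using \<open>lam \<noteq> 0\<close> total by (simp add: sum_scaleR_diff_eq)
  then show ?thesis
    using total by (simp add: W0_iff)
qed

lemma W0_delete:
  assumes "finite I" "w \<in> W0 x I" "j \<in> I"
  shows "sum w (I - {j}) = - w j" and "(\<Sum>i\<in>I - {j}. w i *\<^sub>R (x i - x j)) = 0"
  using assms by (simp_all add: sum_diff1 W0_iff, simp add: W0_def)

lemma W0_barycenter_delete:
  assumes "finite I" "w \<in> W0 x I" "j \<in> I" "w j \<noteq> 0"
  shows "sum w (I - {j}) \<noteq> 0 \<and> x j = barycenter w x (I - {j})"
  using W0_delete[OF assms(1-3)] \<open>w j \<noteq> 0\<close> by (simp add: barycenter_eqI)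

lemma moment2_expand:
  "moment2 w x I p = moment2 w x I 0 - 2 * inner (\<Sum>i\<in>I. w i *\<^sub>R x i) p + sum w I * (norm p)\<^sup>2"
proof -
  have square: "(norm (x i - p))\<^sup>2 = (norm (x i))\<^sup>2 - 2 * inner (x i) p + (norm p)\<^sup>2" for i
    by (simp add: power2_norm_eq_inner inner_diff_left inner_diff_right inner_commute)
  have "moment2 w x I p = (\<Sum>i\<in>I. w i * (norm (x i))\<^sup>2 - 2 * (w i * inner (x i) p) + w i * (norm p)\<^sup>2)"
    unfolding moment2_def square by (simp add: algebra_simps)
  then show ?thesis
    unfolding moment2_def
    by (simp add: sum.distrib sum_subtractf sum_distrib_left sum_distrib_right inner_sum_left)
qed

lemma W0_moment2_const:
  assumes "w \<in> W0 x I"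
  shows "moment2 w x I p = moment2 w x I 0"
  using assms by (subst moment2_expand) (simp add: W0_iff)

lemma W0_sum_sum_less_sdist:
  assumes W: "w \<in> W0 x I"
  shows "(\<Sum>i\<in>I. \<Sum>j\<in>I. if i < j then w i * w j * sdist x i j else 0) = 0"
proof -
  have "(\<Sum>i\<in>I. \<Sum>j\<in>I. w i * w j * sdist x i j) = (\<Sum>i\<in>I. w i * moment2 w x I (x i))"
    unfolding moment2_def sdist_def by (simp add: sum_distrib_left mult.assoc)
  also have "\<dots> = sum w I * moment2 w x I 0"
    by (simp add: sum_distrib_right W0_moment2_const[OF W, of "x _"])
  also have "\<dots> = 0"
    using W by (simp add: W0_iff)
  finally show ?thesis
    using sum_sum_less_symmetric[of "\<lambda>i j. w i * w j * sdist x i j" I]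
    by (simp add: sdist_commute sdist_def mult.commute)
qed

lemma W0_sum_sdist_triangle:
  assumes W: "w \<in> W0 x I"
  shows "(\<Sum>k\<in>I. w k * (sdist x i j - sdist x j k + sdist x i k)) = 0"
proof -
  have "(\<Sum>k\<in>I. w k * (sdist x i j - sdist x j k + sdist x i k))
     = sdist x i j * sum w I - moment2 w x I (x j) + moment2 w x I (x i)"
    unfolding moment2_def sdist_def
    by (simp add: algebra_simps sum.distrib sum_subtractf flip: sum_distrib_right)
  then show ?thesis
    using W by (simp add: W0_iff W0_moment2_const[OF W, of "x _"])
qed

lemma W0_affine_combination_delete:
  fixes x :: "nat \<Rightarrow> 'a::euclidean_space"
  assumes fin: "finite I" and inj: "inj_on x I" and W: "w \<in> W0 x I"
    and nz: "\<forall>i\<in>I. w i \<noteq> 0" and j: "j \<in> I"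
  obtains u where "sum u (x ` (I - {j})) = 1" and "(\<Sum>v\<in>x ` (I - {j}). u v *\<^sub>R v) = x j"
    and "\<forall>v\<in>x ` (I - {j}). u v \<noteq> 0"
proof
  define u where "u v = w (inv_into I x v) / - w j" for v
  have wj: "w j \<noteq> 0"
    using nz j by blast
  have inj': "inj_on x (I - {j})"
    using inj by (rule inj_on_subset) blast
  have u: "u (x i) = w i / - w j" if "i \<in> I - {j}" for i
    using that inj unfolding u_def by simp
  have "sum u (x ` (I - {j})) = (\<Sum>i\<in>I - {j}. w i) / - w j"
    by (simp add: sum.reindex[OF inj'] u sum_divide_distrib sum_negf)
  then show "sum u (x ` (I - {j})) = 1"
    using W0_delete(1)[OF fin W j] wj by simp
  have "(\<Sum>v\<in>x ` (I - {j}). u v *\<^sub>R v) = (1 / - w j) *\<^sub>R (\<Sum>i\<in>I - {j}. w i *\<^sub>R x i)"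
    by (simp add: sum.reindex[OF inj'] u scaleR_sum_right)
  also have "(\<Sum>i\<in>I - {j}. w i *\<^sub>R x i) = sum w (I - {j}) *\<^sub>R x j"
    using W0_delete(2)[OF fin W j] by (simp add: sum_scaleR_diff_eq)
  also have "\<dots> = - w j *\<^sub>R x j"
    using W0_delete(1)[OF fin W j] by simp
  finally show "(\<Sum>v\<in>x ` (I - {j}). u v *\<^sub>R v) = x j"
    using wj by simp
  show "\<forall>v\<in>x ` (I - {j}). u v \<noteq> 0"
    using nz wj u by auto
qed

lemma aff_dim_W0_delete:
  fixes x :: "nat \<Rightarrow> 'a::euclidean_space"
  assumes "finite I" "inj_on x I" "w \<in> W0 x I" "\<forall>i\<in>I. w i \<noteq> 0" "j \<in> I"
  shows "aff_dim (x ` (I - {j})) = aff_dim (x ` I)"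
proof -
  obtain u where u1: "sum u (x ` (I - {j})) = 1" and ux: "(\<Sum>v\<in>x ` (I - {j}). u v *\<^sub>R v) = x j"
    by (rule W0_affine_combination_delete[OF assms])
  have "finite (x ` (I - {j}))"
    using \<open>finite I\<close> by simp
  then have "x j \<in> affine hull (x ` (I - {j}))"
    using u1 ux by (auto simp: affine_hull_finite)
  moreover have "x ` I = insert (x j) (x ` (I - {j}))"
    using \<open>j \<in> I\<close> by auto
  ultimately show ?thesis
    by (simp only: aff_dim_insert if_True)
qed

lemma aff_dim_W0_le:
  fixes x :: "nat \<Rightarrow> 'a::euclidean_space"
  assumes "finite I" "inj_on x I" "w \<in> W0 x I" "\<forall>i\<in>I. w i \<noteq> 0" "I \<noteq> {}"
  shows "aff_dim (x ` I) \<le> int (card I) - 2"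
proof -
  obtain j where j: "j \<in> I"
    using \<open>I \<noteq> {}\<close> by blast
  have "card (x ` (I - {j})) = card I - 1"
    using assms(1,2) j by (simp add: card_image inj_on_diff)
  moreover have "card I \<ge> 1"
    using assms(1) j by (auto simp: Suc_le_eq card_gt_0_iff)
  ultimately show ?thesis
    using aff_dim_W0_delete[OF assms(1-4) j] aff_dim_le_card[of "x ` (I - {j})"] assms(1)
    by simp
qed

lemma affine_combination_notin_rel_frontier:
  fixes Y :: "'a::euclidean_space set"
  assumes indep: "\<not> affine_dependent Y" and u1: "sum u Y = 1"
    and uz: "(\<Sum>v\<in>Y. u v *\<^sub>R v) = z" and nz: "\<forall>v\<in>Y. u v \<noteq> 0"
  shows "z \<notin> rel_frontier (convex hull Y)"
proof
  assume "z \<in> rel_frontier (convex hull Y)"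
  have fin: "finite Y"
    using indep by (rule aff_independent_finite)
  then have "z \<in> convex hull Y"
    using \<open>z \<in> rel_frontier _\<close> by (simp add: rel_frontier_def finite_imp_compact)
  then obtain c where c0: "\<forall>v\<in>Y. 0 \<le> c v" and c1: "sum c Y = 1" and cz: "(\<Sum>v\<in>Y. c v *\<^sub>R v) = z"
    unfolding convex_hull_finite[OF fin] by blast
  \<comment> \<open>barycentric coordinates with respect to an affinely independent set are unique\<close>
  have "\<forall>v\<in>Y. c v - u v = 0"
  proof (rule ccontr)
    assume "\<not> (\<forall>v\<in>Y. c v - u v = 0)"
    then have "affine_dependent Y"
      unfolding affine_dependent_explicit_finite[OF fin] using u1 uz c1 cz
      by (intro exI[of _ "\<lambda>v. c v - u v"]) (auto simp: sum_subtractf scaleR_left_diff_distrib)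
    then show False
      using indep by simp
  qed
  then have "\<forall>v\<in>Y. 0 < u v"
    using c0 nz by force
  then have "z \<in> rel_interior (convex hull Y)"
    unfolding rel_interior_convex_hull_explicit[OF indep] using u1 uz by blast
  then show False
    using \<open>z \<in> rel_frontier _\<close> by (simp add: rel_frontier_def)
qed

lemma W0_codim_one_simplex_delete:
  fixes x :: "nat \<Rightarrow> 'a::euclidean_space"
  assumes fin: "finite I" and inj: "inj_on x I" and W: "w \<in> W0 x I"
    and nz: "\<forall>i\<in>I. w i \<noteq> 0" and j: "j \<in> I"
    and codim: "aff_dim (x ` I) = int (card I) - 2"
  shows "aff_dim (x ` I) simplex (convex hull (x ` (I - {j})))
    \<and> x j \<notin> rel_frontier (convex hull (x ` (I - {j})))"
proof -
  define Y where "Y = x ` (I - {j})"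
  have card: "card Y = card I - 1"
    using fin inj j by (simp add: Y_def card_image inj_on_diff)
  have "card I \<ge> 1"
    using fin j by (auto simp: Suc_le_eq card_gt_0_iff)
  then have "aff_dim Y = int (card Y) - 1"
    using aff_dim_W0_delete[OF fin inj W nz j, folded Y_def] codim card \<open>card I \<ge> 1\<close> by simp
  then have indep: "\<not> affine_dependent Y"
    by (simp add: affine_independent_iff_card Y_def fin)
  have "aff_dim (x ` I) simplex (convex hull Y)"
    unfolding simplex_def using indep card codim \<open>card I \<ge> 1\<close>
    by (intro exI[of _ Y]) (simp add: of_nat_diff)
  moreover obtain u where "sum u Y = 1" "(\<Sum>v\<in>Y. u v *\<^sub>R v) = x j" "\<forall>v\<in>Y. u v \<noteq> 0"
    using W0_affine_combination_delete[OF fin inj W nz j] unfolding Y_def by blast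
  ultimately show ?thesis
    using affine_combination_notin_rel_frontier[OF indep] unfolding Y_def by blast
qed

lemma affine_coords_W0_sum_eq_0:
  fixes x :: "nat \<Rightarrow> 'a::euclidean_space"
  assumes coords: "affine_coords x I d y" and W: "w \<in> W0 x I" and r: "r < d"
  shows "(\<Sum>i\<in>I. w i * y i r) = 0"
proof -
  obtain orig b where inj: "inj_on b {..<d}" and indep: "independent (b ` {..<d})"
    and x: "\<forall>i\<in>I. x i = orig + (\<Sum>k<d. y i k *\<^sub>R b k)"
    using coords unfolding affine_coords_def by blast
  define c where "c k = (\<Sum>i\<in>I. w i * y i k)" for k
  have "(\<Sum>k<d. c k *\<^sub>R b k) = (\<Sum>i\<in>I. w i *\<^sub>R (x i - orig))"
    unfolding c_def using x
    by (simp add: scaleR_sum_left scaleR_sum_right sum.swap[of _ "{..<d}"])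
  also have "\<dots> = 0"
    using W unfolding W0_def by blast
  finally have "(\<Sum>v\<in>b ` {..<d}. c (inv_into {..<d} b v) *\<^sub>R v) = 0"
    by (subst sum.reindex_cong[OF inj refl]) (auto simp: inv_into_f_f[OF inj])
  then have "\<forall>v\<in>b ` {..<d}. c (inv_into {..<d} b v) = 0"
    using indep by (auto simp: dependent_finite)
  then show ?thesis
    using r inj unfolding c_def by auto
qed

lemma ldet_eq_det: "ldet k A = det (mat k k (\<lambda>(r, c). A r c))"
  unfolding ldet_def det_def by (auto simp: atLeast0LessThan intro!: sum.cong prod.cong)

lemma det_replace_col_sum:
  fixes A :: "'a::comm_ring_1 mat"
  assumes A: "A \<in> carrier_mat k k" and p: "p < k"
  shows "det (replace_col A (vec k (\<lambda>r. \<Sum>l\<in>L. c l * f l r)) p)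
    = (\<Sum>l\<in>L. c l * det (replace_col A (vec k (f l)) p))"
proof -
  have expand: "det (replace_col A (vec k v) p) = (\<Sum>\<pi> | \<pi> permutes {0..<k}.
      signof \<pi> * (v (\<pi> p) * (\<Prod>j\<in>{..<k} - {p}. A $$ (\<pi> j, j))))" for v
  proof -
    have B: "replace_col A (vec k v) p \<in> carrier_mat k k"
      using A by (simp add: replace_col_def)
    show ?thesis
      unfolding det_col[OF B]
    proof (intro sum.cong refl)
      fix \<pi> assume "\<pi> \<in> {\<pi>. \<pi> permutes {0..<k}}"
      then have "\<pi> j < k" if "j < k" for j
        using permutes_in_image that by fastforce
      then have "(\<Prod>j<k. replace_col A (vec k v) p $$ (\<pi> j, j))
          = v (\<pi> p) * (\<Prod>j\<in>{..<k} - {p}. A $$ (\<pi> j, j))"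
        using A p by (subst prod.remove[of _ p]) (auto simp: replace_col_def intro!: prod.cong)
      then show "signof \<pi> * (\<Prod>j<k. replace_col A (vec k v) p $$ (\<pi> j, j))
          = signof \<pi> * (v (\<pi> p) * (\<Prod>j\<in>{..<k} - {p}. A $$ (\<pi> j, j)))"
        by simp
    qed
  qed
  show ?thesis
    unfolding expand
    by (simp add: sum_distrib_left sum_distrib_right sum.swap[of _ L] mult.assoc mult.left_commute)
qed

definition aug_col :: "(nat \<Rightarrow> nat \<Rightarrow> real) \<Rightarrow> nat \<Rightarrow> nat \<Rightarrow> real" where
  "aug_col y j r = (if r = 0 then 1 else y j (r - 1))"

definition aug_mat :: "nat \<Rightarrow> (nat \<Rightarrow> nat \<Rightarrow> real) \<Rightarrow> (nat \<Rightarrow> nat) \<Rightarrow> real mat" where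
  "aug_mat k y F = mat k k (\<lambda>(r, c). aug_col y (F c) r)"

lemma aug_mat_carrier [simp]: "aug_mat k y F \<in> carrier_mat k k"
  by (simp add: aug_mat_def)

lemma aug_mat_cong: "(\<And>c. c < k \<Longrightarrow> F c = G c) \<Longrightarrow> aug_mat k y F = aug_mat k y G"
  unfolding aug_mat_def by (intro eq_matI) auto

lemma aug_det_eq_det_aug_mat:
  "aug_det d y S = det (aug_mat (d + 1) y ((!) (sorted_list_of_set S)))"
  unfolding aug_det_def ldet_eq_det aug_mat_def aug_col_def by simp

lemma replace_col_aug_mat:
  assumes "p < k"
  shows "replace_col (aug_mat k y F) (vec k (aug_col y l)) p = aug_mat k y (F(p := l))"
  using assms by (intro eq_matI) (auto simp: replace_col_def aug_mat_def)

lemma det_aug_mat_move_col_last: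
  assumes "p \<le> d"
  shows "det (aug_mat (d + 1) y F) = (-1) ^ (d - p)
    * det (aug_mat (d + 1) y (\<lambda>c. if c < p then F c else if c < d then F (c + 1) else F p))"
proof -
  have "det (aug_mat (d + 1) y F) = (-1) ^ (1 * (d - p)) * det (mat (d + 1) (d + 1)
      (\<lambda>(i, j). aug_mat (d + 1) y F $$ (i, if j < p then j else if j < p + (d - p) then j + 1 else j - (d - p))))"
    by (rule det_swap_final_cols) (use assms in auto)
  also have "mat (d + 1) (d + 1)
      (\<lambda>(i, j). aug_mat (d + 1) y F $$ (i, if j < p then j else if j < p + (d - p) then j + 1 else j - (d - p)))
    = aug_mat (d + 1) y (\<lambda>c. if c < p then F c else if c < d then F (c + 1) else F p)"
  proof -
    have "j + p - d = p" if "\<not> j < d" "j < d + 1" for j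
      using that by simp
    then show ?thesis
      using assms by (intro eq_matI) (auto simp: aug_mat_def)
  qed
  finally show ?thesis
    by simp
qed

lemma Delta_last:
  assumes "d + 1 \<le> n"
  shows "Delta n d y {d+2..n} = det (aug_mat (d + 1) y Suc)"
proof -
  have "{1..n} - {d+2..n} = {1..<d+2}"
    using assms by auto
  then show ?thesis
    unfolding Delta_def aug_det_eq_det_aug_mat
    by (auto simp del: upt_Suc intro!: arg_cong[where f = det] aug_mat_cong)
qed

lemma Delta_insert_delete:
  assumes i: "i \<in> {1..d+1}" and l: "l \<in> {d+2..n}"
  shows "Delta n d y (insert i ({d+2..n} - {l}))
    = det (aug_mat (d + 1) y (\<lambda>c. if c < i - 1 then c + 1 else if c < d then c + 2 else l))"
proof -
  have S: "{1..n} - insert i ({d+2..n} - {l}) = set ([1..<i] @ [Suc i..<d+2] @ [l])"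
    using i l by auto
  have "sorted_list_of_set ({1..n} - insert i ({d+2..n} - {l})) = [1..<i] @ [Suc i..<d+2] @ [l]"
    unfolding S by (rule sorted_list_of_set.idem_if_sorted_distinct) (use i l in \<open>auto simp: sorted_append\<close>)
  then show ?thesis
    unfolding Delta_def aug_det_eq_det_aug_mat
    using i by (intro arg_cong[where f = det] aug_mat_cong) (auto simp: nth_append)
qed

lemma aug_mat_mult_vec_masses:
  assumes dn: "d + 1 \<le> n"
    and balance: "\<And>r. r < d + 1 \<Longrightarrow> (\<Sum>j\<in>{1..n}. m j * aug_col y j r) = 0"
  shows "aug_mat (d + 1) y Suc *\<^sub>v vec (d + 1) (\<lambda>c. m (Suc c))
    = vec (d + 1) (\<lambda>r. \<Sum>l\<in>{d+2..n}. - m l * aug_col y l r)"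
proof -
  have "{1..n} = Suc ` {..<d + 1} \<union> {d+2..n}" and "Suc ` {..<d + 1} \<inter> {d+2..n} = {}"
    using dn by (auto simp: lessThan_atLeast0)
  then have "(\<Sum>j\<in>{1..n}. m j * aug_col y j r)
      = (\<Sum>c<d + 1. m (Suc c) * aug_col y (Suc c) r) + (\<Sum>l\<in>{d+2..n}. m l * aug_col y l r)" for r
    by (simp add: sum.union_disjoint sum.reindex)
  then have "(\<Sum>c<d + 1. aug_col y (Suc c) r * m (Suc c)) = (\<Sum>l\<in>{d+2..n}. - m l * aug_col y l r)"
    if "r < d + 1" for r
    using balance[OF that] by (simp add: sum_negf mult.commute)
  then show ?thesis
    by (intro eq_vecI) (auto simp: aug_mat_def scalar_prod_def lessThan_atLeast0)
qed

lemma det_replace_col_aug_mat_Delta: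
  assumes p: "p \<le> d" and l: "l \<in> {d+2..n}"
  shows "det (replace_col (aug_mat (d + 1) y Suc) (vec (d + 1) (aug_col y l)) p)
    = (-1) ^ (d - p) * Delta n d y (insert (Suc p) ({d+2..n} - {l}))"
proof -
  have "det (replace_col (aug_mat (d + 1) y Suc) (vec (d + 1) (aug_col y l)) p)
      = det (aug_mat (d + 1) y (Suc(p := l)))"
    using p by (simp add: replace_col_aug_mat)
  also have "\<dots> = (-1) ^ (d - p) * det (aug_mat (d + 1) y
      (\<lambda>c. if c < Suc p - 1 then c + 1 else if c < d then c + 2 else l))"
    using p l by (subst det_aug_mat_move_col_last[OF p]) (auto intro!: arg_cong[where f = det] aug_mat_cong)
  finally show ?thesis
    using Delta_insert_delete[where i = "Suc p"] p l by simp
qed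

lemma Delta_cramer:
  assumes dn: "d + 1 \<le> n" and total: "sum m {1..n} = 0"
    and coords: "\<forall>r<d. (\<Sum>j\<in>{1..n}. m j * y j r) = 0" and i: "i \<in> {1..d+1}"
  shows "(-1) powi (int i - int d) * m i * Delta n d y {d+2..n}
    = (\<Sum>l\<in>{d+2..n}. m l * Delta n d y (insert i ({d+2..n} - {l})))"
proof -
  define p where "p = i - 1"
  have p: "p \<le> d" and i_eq: "i = Suc p"
    using i by (auto simp: p_def)
  define V where "V = aug_mat (d + 1) y Suc"
  define mv where "mv = vec (d + 1) (\<lambda>c. m (Suc c))"
  define S where "S = (\<Sum>l\<in>{d+2..n}. m l * Delta n d y (insert i ({d+2..n} - {l})))"
  have "(\<Sum>j\<in>{1..n}. m j * aug_col y j r) = 0" if "r < d + 1" for r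
    using total coords that by (cases r) (auto simp: aug_col_def)
  then have Vmv: "V *\<^sub>v mv = vec (d + 1) (\<lambda>r. \<Sum>l\<in>{d+2..n}. - m l * aug_col y l r)"
    unfolding V_def mv_def by (rule aug_mat_mult_vec_masses[OF dn])
  have "m i * det V = det (replace_col V (V *\<^sub>v mv) p)"
    using cramer_lemma_mat[of V "d + 1" mv p] p by (simp add: V_def mv_def i_eq)
  also have "\<dots> = (\<Sum>l\<in>{d+2..n}. - m l * det (replace_col V (vec (d + 1) (aug_col y l)) p))"
    unfolding Vmv by (rule det_replace_col_sum) (use p in \<open>auto simp: V_def\<close>)
  also have "\<dots> = (\<Sum>l\<in>{d+2..n}. - m l * ((-1) ^ (d - p) * Delta n d y (insert i ({d+2..n} - {l}))))"
    unfolding V_def i_eq by (intro sum.cong refl) (simp only: det_replace_col_aug_mat_Delta[OF p])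
  also have "\<dots> = - ((-1) ^ (d - p)) * S"
    unfolding S_def by (simp add: sum_distrib_left sum_negf mult.left_commute)
  finally have key: "m i * det V = - ((-1) ^ (d - p)) * S" .
  have sign: "(-1::real) powi (int i - int d) * (-1) ^ (d - p) = -1"
  proof -
    have exponent: "int i - int d = 1 - int (d - p)"
      using p i_eq by auto
    show ?thesis
      unfolding exponent power_int_diff[of "-1::real", simplified] by simp
  qed
  have "(-1) powi (int i - int d) * m i * det V = - ((-1) powi (int i - int d) * (-1) ^ (d - p)) * S"
    by (simp add: key mult.assoc)
  then show ?thesis
    unfolding sign Delta_last[OF dn] V_def[symmetric] S_def by simp
qed

theorem proposition5p1:
  fixes x :: "nat \<Rightarrow> 'a::euclidean_space"
    and m :: "nat \<Rightarrow> real" and a lam :: real and n :: nat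
  assumes n_pos: "n \<ge> 1"
    and distinct: "inj_on x {1..n}"
    and masses: "\<forall>i\<in>{1..n}. m i \<noteq> 0"
    and a_nz: "a \<noteq> 0"
    and total: "(\<Sum>i\<in>{1..n}. m i) = 0"
    and lam_nz: "lam \<noteq> 0"
    and cc: "central m a x {1..n} lam"
  shows
    "m \<in> W0 x {1..n}
     \<and> (\<forall>j\<in>{1..n}. (\<Sum>i\<in>{1..n} - {j}. m i) \<noteq> 0 \<and> x j = barycenter m x ({1..n} - {j}))
     \<and> (int n - 1) - aff_dim (x ` {1..n}) \<ge> 1
     \<and> (\<exists>C. \<forall>p. moment2 m x {1..n} p = C)
     \<and> (\<Sum>i\<in>{1..n}. \<Sum>j\<in>{1..n}. if i < j then m i * m j * sdist x i j else 0) = 0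
     \<and> (\<forall>i\<in>{1..n}. \<forall>j\<in>{1..n}.
          (\<Sum>k\<in>{1..n}. m k * (sdist x i j - sdist x j k + sdist x i k)) = 0)
     \<and> ((int n - 1) - aff_dim (x ` {1..n}) = 1 \<longrightarrow>
          (\<forall>j\<in>{1..n}. aff_dim (x ` {1..n}) simplex (convex hull (x ` ({1..n} - {j})))
                     \<and> x j \<notin> rel_frontier (convex hull (x ` ({1..n} - {j})))))
     \<and> aff_dim (x ` {1..n}) \<le> int n - 2
     \<and> (\<forall>y. affine_coords x {1..n} (nat (aff_dim (x ` {1..n}))) y \<longrightarrow>
          (let d = nat (aff_dim (x ` {1..n})) in
            Delta n d y {d+2..n} \<noteq> 0 \<longrightarrow>
            (\<forall>i\<in>{1..d+1}.
               (-1) powi (int i - int d) * m i * Delta n d y {d+2..n}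
               = (\<Sum>l\<in>{d+2..n}. m l * Delta n d y (insert i ({d+2..n} - {l}))))))"
proof -
  let ?d = "aff_dim (x ` {1..n})"
  have W: "m \<in> W0 x {1..n}"
    using central_imp_W0[OF _ total lam_nz cc] by simp
  have aff_dim_le: "?d \<le> int n - 2"
    using aff_dim_W0_le[OF _ distinct W masses] n_pos by simp
  have "x ` {1..n} \<noteq> {}"
    using n_pos by simp
  then have "?d \<ge> 0"
    using aff_dim_negative_iff[of "x ` {1..n}"] by linarith
  then have codim_ge: "(int n - 1) - ?d \<ge> 1" and d_le: "nat ?d + 1 \<le> n"
    using aff_dim_le by linarith+
  have barycenters: "\<forall>j\<in>{1..n}. sum m ({1..n} - {j}) \<noteq> 0 \<and> x j = barycenter m x ({1..n} - {j})"
    using W0_barycenter_delete[OF _ W] masses by simp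
  have moment2_const: "\<exists>C. \<forall>p. moment2 m x {1..n} p = C"
    using W0_moment2_const[OF W] by blast
  have triangle: "\<forall>i\<in>{1..n}. \<forall>j\<in>{1..n}. (\<Sum>k\<in>{1..n}. m k * (sdist x i j - sdist x j k + sdist x i k)) = 0"
    using W0_sum_sdist_triangle[OF W] by blast
  have codim_one: "(int n - 1) - ?d = 1 \<longrightarrow> (\<forall>j\<in>{1..n}. ?d simplex (convex hull (x ` ({1..n} - {j})))
      \<and> x j \<notin> rel_frontier (convex hull (x ` ({1..n} - {j}))))"
    by (intro impI ballI W0_codim_one_simplex_delete[OF finite_atLeastAtMost distinct W masses]) simp_all
  have Delta_identity: "\<forall>y. affine_coords x {1..n} (nat ?d) y \<longrightarrow>
      (let d = nat ?d in Delta n d y {d+2..n} \<noteq> 0 \<longrightarrow> (\<forall>i\<in>{1..d+1}.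
        (-1) powi (int i - int d) * m i * Delta n d y {d+2..n}
        = (\<Sum>l\<in>{d+2..n}. m l * Delta n d y (insert i ({d+2..n} - {l})))))"
    unfolding Let_def using Delta_cramer[OF d_le total] affine_coords_W0_sum_eq_0[OF _ W] by blast
  show ?thesis
    by (intro conjI W barycenters codim_ge moment2_const W0_sum_sum_less_sdist[OF W] triangle
        codim_one aff_dim_le Delta_identity)
qed

end
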